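(* If the toric algebra $A_{\mathscr{E}}$ is consistent, then every arrow of $Q$ lies on some anticanonical cycle, and hence appears in a term of the superpotential $W=\sum_{p\text{ anticanonical}}p$.
   Context: Let $\mathbb{k}$ be an algebraically closed field and $X=\operatorname{Spec}R$ a normal affine toric variety of dimension $n$ with a torus-fixed point, $R=\mathbb{k}[\sigma^\vee\cap M]$, $\sigma\subset N\otimes\mathbb{R}$ strongly convex rational polyhedral. Let $\sigma(1)$ be the rays, $d=|\sigma(1)|$, $v_\rho$ primitive generators, $D_\rho$ toric prime divisors, torus-invariant divisors identified with $\mathbb{Z}^d$, $\deg:\mathbb{Z}^d\to\operatorname{Cl}(X)$ the class map. Cox ring $\mathbb{k}[x_\rho]$, $x^D=\prod x_\rho^{D_\rho}$. Assume $X$ is Gorenstein: $(1,\dots,1)\in\mathbb{Z}^d$ lies in the image of $M$ under $u\mapsto\sum\langle u,v_\rho\rangle D_\rho$. Let $\mathscr{E}=(E_0=\mathcal{O}_X,E_1,\dots,E_r)$ be pairwise distinct rank one reflexive sheaves, $E_i=\mathcal{O}_X(D_i')$, and $Q$ its quiver of sections: vertices $0,\dots,r$; an arrow $a:i\to j$ with label $\operatorname{div}(a)\in\mathbb{N}^d$ for each irreducible $T_M$-invariant section $x^{\operatorname{div}(a)}$ of $\operatorname{Hom}(E_i,E_j)\cong H^0(\mathcal{O}_X(D_j'-D_i'))$ (irreducible: not in the image of multiplication through any $E_k$, $k\neq i,j$). Paths compose right to left; $\operatorname{div}(p)$ is the sum of labels of arrows of $p$. $J_{\mathscr{E}}$ is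 generated by $p^+-p^-$ over pairs of paths with equal head, tail and label; $A_{\mathscr{E}}=\mathbb{k}Q/J_{\mathscr{E}}$. A cycle $p$ is anticanonical if $x^{\operatorname{div}(p)}=\prod_\rho x_\rho$; $W\in\mathbb{k}Q/[\mathbb{k}Q,\mathbb{k}Q]$ is the sum of all anticanonical cycles. For a path $q$, $\partial_qW$ is the sum of all paths $p$ such that $pq$ is an anticanonical cycle. $\mathscr{P}$ is the set of paths $q$ with $\partial_qW$ a sum of precisely two paths sharing neither initial nor final arrow; $J_W$ is generated by $p^+-p^-$ whenever $\partial_qW=p^++p^-$, $q\in\mathscr{P}$. $A_{\mathscr{E}}$ is consistent if $J_W=J_{\mathscr{E}}$. *)

theory Defs
  imports "HOL-Analysis.Analysis" "HOL-Computational_Algebra.Polynomial" "HOL-Library.Function_Algebras"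
begin

text \<open>Combinatorial model of a normal affine toric variety X = Spec k[sigma-dual cap M].
 The lattice N = M is 'n => int (with 'n a finite index type, n = CARD('n));
 the rays of sigma are indexed by a finite type 'r (d = CARD('r)), with primitive
 generators v rho. Torus-invariant Weil divisors are 'r => int (= Z^d).\<close>

definition pairing :: "('n::finite \<Rightarrow> int) \<Rightarrow> ('n \<Rightarrow> int) \<Rightarrow> int" where
  "pairing u w = (\<Sum>i\<in>UNIV. u i * w i)"

definition divM :: "('r \<Rightarrow> 'n::finite \<Rightarrow> int) \<Rightarrow> ('n \<Rightarrow> int) \<Rightarrow> ('r \<Rightarrow> int)" where
  "divM v u = (\<lambda>\<rho>. pairing u (v \<rho>))"

definition lin_equiv :: "('r \<Rightarrow> 'n::finite \<Rightarrow> int) \<Rightarrow> ('r \<Rightarrow> int) \<Rightarrow> ('r \<Rightarrow> int) \<Rightarrow> bool" where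
  "lin_equiv v A B \<longleftrightarrow> (\<exists>u. A - B = divM v u)"

definition realvec :: "('r \<Rightarrow> 'n::finite \<Rightarrow> int) \<Rightarrow> 'r \<Rightarrow> real ^ 'n" where
  "realvec v \<rho> = (\<chi> i. real_of_int (v \<rho> i))"

text \<open>v lists exactly the primitive ray generators of a strongly convex rational polyhedral
 cone sigma (the cone they generate) which is full dimensional (torus-fixed point).\<close>
definition toric_cone_rays :: "('r::finite \<Rightarrow> 'n::finite \<Rightarrow> int) \<Rightarrow> bool" where
  "toric_cone_rays v \<longleftrightarrow>
     inj v
   \<and> (\<forall>\<rho> (k::int). (\<forall>i. k dvd v \<rho> i) \<longrightarrow> is_unit k)
   \<and> (\<forall>\<rho>. \<not> (\<exists>c::'r \<Rightarrow> real. (\<forall>\<rho>'. c \<rho>' \<ge> 0) \<and>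
              realvec v \<rho> = (\<Sum>\<rho>'\<in>UNIV - {\<rho>}. c \<rho>' *\<^sub>R realvec v \<rho>')))
   \<and> (\<forall>c::'r \<Rightarrow> real. (\<forall>\<rho>. c \<rho> \<ge> 0) \<and> (\<Sum>\<rho>\<in>UNIV. c \<rho> *\<^sub>R realvec v \<rho>) = 0
          \<longrightarrow> (\<forall>\<rho>. c \<rho> = 0))
   \<and> span (range (realvec v)) = UNIV"

definition gorenstein :: "('r \<Rightarrow> 'n::finite \<Rightarrow> int) \<Rightarrow> bool" where
  "gorenstein v \<longleftrightarrow> (\<exists>u. divM v u = (\<lambda>_. 1))"

definition alg_closed_field :: "'k::field itself \<Rightarrow> bool" where
  "alg_closed_field _ \<longleftrightarrow> (\<forall>p::'k poly. degree p > 0 \<longrightarrow> (\<exists>x. poly p x = 0))"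

text \<open>T_M-invariant sections of Hom(O(A),O(B)) = H^0(O(B-A)) are the monomials x^E with
 E in N^d effective and linearly equivalent to B - A.\<close>
definition is_section :: "('r \<Rightarrow> 'n::finite \<Rightarrow> int) \<Rightarrow> ('r \<Rightarrow> int) \<Rightarrow> ('r \<Rightarrow> int) \<Rightarrow> ('r \<Rightarrow> nat) \<Rightarrow> bool" where
  "is_section v A B E \<longleftrightarrow> lin_equiv v (\<lambda>\<rho>. int (E \<rho>)) (B - A)"

text \<open>Collection E_i = O(D i), i = 0..r. Irreducible sections (nonzero label; the identity
 section is the trivial path, not an arrow).\<close>
definition irreducible_sec ::
  "('r \<Rightarrow> 'n::finite \<Rightarrow> int) \<Rightarrow> (nat \<Rightarrow> 'r \<Rightarrow> int) \<Rightarrow> nat \<Rightarrow> nat \<Rightarrow> nat \<Rightarrow> ('r \<Rightarrow> nat) \<Rightarrow> bool" where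
  "irreducible_sec v D r i j E \<longleftrightarrow>
     E \<noteq> 0 \<and> is_section v (D i) (D j) E \<and>
     \<not> (\<exists>k\<le>r. k \<noteq> i \<and> k \<noteq> j \<and> (\<exists>E1 E2. is_section v (D i) (D k) E1 \<and>
                   is_section v (D k) (D j) E2 \<and> E = E1 + E2))"

type_synonym 'r arrow = "nat \<times> nat \<times> ('r \<Rightarrow> nat)"   (* (tail, head, label) *)
type_synonym 'r qpath = "nat \<times> 'r arrow list"        (* (tail vertex, arrows in order traversed) *)

definition arrows :: "('r \<Rightarrow> 'n::finite \<Rightarrow> int) \<Rightarrow> (nat \<Rightarrow> 'r \<Rightarrow> int) \<Rightarrow> nat \<Rightarrow> 'r arrow set" where
  "arrows v D r = {(i, j, E). i \<le> r \<and> j \<le> r \<and> irreducible_sec v D r i j E}"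

fun chain :: "'r arrow set \<Rightarrow> nat \<Rightarrow> 'r arrow list \<Rightarrow> bool" where
  "chain A s [] = True"
| "chain A s ((i, j, E) # as) = (i = s \<and> (i, j, E) \<in> A \<and> chain A j as)"

fun endv :: "nat \<Rightarrow> 'r arrow list \<Rightarrow> nat" where
  "endv s [] = s"
| "endv s ((i, j, E) # as) = endv j as"

definition is_path :: "('r \<Rightarrow> 'n::finite \<Rightarrow> int) \<Rightarrow> (nat \<Rightarrow> 'r \<Rightarrow> int) \<Rightarrow> nat \<Rightarrow> 'r qpath \<Rightarrow> bool" where
  "is_path v D r p \<longleftrightarrow> fst p \<le> r \<and> chain (arrows v D r) (fst p) (snd p)"

definition ptail :: "'r qpath \<Rightarrow> nat" where "ptail p = fst p"
definition phead :: "'r qpath \<Rightarrow> nat" where "phead p = endv (fst p) (snd p)"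

definition pdiv :: "'r qpath \<Rightarrow> ('r \<Rightarrow> nat)" where
  "pdiv p = sum_list (map (\<lambda>(i, j, E). E) (snd p))"

text \<open>pcomp p q is the path "p q": first q, then p (composition right to left).\<close>
definition pcomp :: "'r qpath \<Rightarrow> 'r qpath \<Rightarrow> 'r qpath" where
  "pcomp p q = (ptail q, snd q @ snd p)"

definition anticanonical :: "('r \<Rightarrow> 'n::finite \<Rightarrow> int) \<Rightarrow> (nat \<Rightarrow> 'r \<Rightarrow> int) \<Rightarrow> nat \<Rightarrow> 'r qpath \<Rightarrow> bool" where
  "anticanonical v D r p \<longleftrightarrow> is_path v D r p \<and> phead p = ptail p \<and> pdiv p = (\<lambda>_. 1)"

text \<open>The set of paths p occurring in the formal sum partial_q W: pq is an anticanonical cycle.\<close>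
definition dW :: "('r \<Rightarrow> 'n::finite \<Rightarrow> int) \<Rightarrow> (nat \<Rightarrow> 'r \<Rightarrow> int) \<Rightarrow> nat \<Rightarrow> 'r qpath \<Rightarrow> 'r qpath set" where
  "dW v D r q = {p. is_path v D r p \<and> ptail p = phead q \<and> anticanonical v D r (pcomp p q)}"

text \<open>partial_q W = p1 + p2 with p1, p2 sharing neither initial nor final arrow.\<close>
definition two_term :: "('r \<Rightarrow> 'n::finite \<Rightarrow> int) \<Rightarrow> (nat \<Rightarrow> 'r \<Rightarrow> int) \<Rightarrow> nat \<Rightarrow> 'r qpath \<Rightarrow> 'r qpath \<Rightarrow> 'r qpath \<Rightarrow> bool" where
  "two_term v D r q p1 p2 \<longleftrightarrow> is_path v D r q \<and> dW v D r q = {p1, p2} \<and> p1 \<noteq> p2 \<and>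
     snd p1 \<noteq> [] \<and> snd p2 \<noteq> [] \<and> hd (snd p1) \<noteq> hd (snd p2) \<and> last (snd p1) \<noteq> last (snd p2)"

text \<open>Path algebra kQ: elements are (finitely supported) functions from paths to k;
 basis vector of a path, and left/right multiplication by a path.\<close>
definition bvec :: "'r qpath \<Rightarrow> ('r qpath \<Rightarrow> 'k::field)" where
  "bvec p = (\<lambda>w. if w = p then 1 else 0)"

definition lmult :: "'r qpath \<Rightarrow> ('r qpath \<Rightarrow> 'k::field) \<Rightarrow> ('r qpath \<Rightarrow> 'k)" where
  "lmult u f = (\<lambda>w. if (\<exists>p. phead p = ptail u \<and> w = pcomp u p)
                    then f (THE p. phead p = ptail u \<and> w = pcomp u p) else 0)"

definition rmult :: "('r qpath \<Rightarrow> 'k::field) \<Rightarrow> 'r qpath \<Rightarrow> ('r qpath \<Rightarrow> 'k)" where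
  "rmult f u = (\<lambda>w. if (\<exists>p. phead u = ptail p \<and> w = pcomp p u)
                    then f (THE p. phead u = ptail p \<and> w = pcomp p u) else 0)"

inductive_set ideal_gen :: "('r qpath \<Rightarrow> bool) \<Rightarrow> ('r qpath \<Rightarrow> 'k::field) set \<Rightarrow> ('r qpath \<Rightarrow> 'k) set"
  for P G where
  gen: "g \<in> G \<Longrightarrow> g \<in> ideal_gen P G"
| zero: "0 \<in> ideal_gen P G"
| add: "f \<in> ideal_gen P G \<Longrightarrow> h \<in> ideal_gen P G \<Longrightarrow> f + h \<in> ideal_gen P G"
| smult: "f \<in> ideal_gen P G \<Longrightarrow> (\<lambda>w. c * f w) \<in> ideal_gen P G"
| lmult: "f \<in> ideal_gen P G \<Longrightarrow> P u \<Longrightarrow> lmult u f \<in> ideal_gen P G"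
| rmult: "f \<in> ideal_gen P G \<Longrightarrow> P u \<Longrightarrow> rmult f u \<in> ideal_gen P G"

definition J_E :: "'k::field itself \<Rightarrow> ('r \<Rightarrow> 'n::finite \<Rightarrow> int) \<Rightarrow> (nat \<Rightarrow> 'r \<Rightarrow> int) \<Rightarrow> nat \<Rightarrow> ('r qpath \<Rightarrow> 'k) set" where
  "J_E _ v D r = ideal_gen (is_path v D r)
     {bvec p - bvec p' | p p'. is_path v D r p \<and> is_path v D r p' \<and> ptail p = ptail p' \<and>
                             phead p = phead p' \<and> pdiv p = pdiv p'}"

definition J_W :: "'k::field itself \<Rightarrow> ('r \<Rightarrow> 'n::finite \<Rightarrow> int) \<Rightarrow> (nat \<Rightarrow> 'r \<Rightarrow> int) \<Rightarrow> nat \<Rightarrow> ('r qpath \<Rightarrow> 'k) set" where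
  "J_W _ v D r = ideal_gen (is_path v D r)
     {bvec p1 - bvec p2 | q p1 p2. two_term v D r q p1 p2}"

definition consistent :: "'k::field itself \<Rightarrow> ('r \<Rightarrow> 'n::finite \<Rightarrow> int) \<Rightarrow> (nat \<Rightarrow> 'r \<Rightarrow> int) \<Rightarrow> nat \<Rightarrow> bool" where
  "consistent K v D r \<longleftrightarrow> J_W K v D r = J_E K v D r"

end

theory Submission
  imports Defs
begin

text \<open>Suppose the arrow a lies on no anticanonical cycle. For an element f of kQ and
  vertices s, t, sum the coefficients of f over the paths from s to t that avoid a.
  These sums vanish on the generators of J_W (both terms of a two-term derivative are
  completed to anticanonical cycles by the same path, so both avoid a and have the same
  ends), and their vanishing is preserved by the ideal operations. On the other hand, by
  the Gorenstein property a extends to a cycle of label (m,...,m), and so does the m-th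
  power of an anticanonical cycle at the tail of a; their difference lies in J_E but not
  in J_W.\<close>

lemma endv_append: "endv s (xs @ ys) = endv (endv s xs) ys"
  by (induction s xs rule: endv.induct) auto

lemma chain_append: "chain A s (xs @ ys) \<longleftrightarrow> chain A s xs \<and> chain A (endv s xs) ys"
  by (induction A s xs rule: chain.induct) auto

lemma ptail_pcomp [simp]: "ptail (pcomp p q) = ptail q"
  by (simp add: pcomp_def ptail_def)

lemma phead_pcomp [simp]: "ptail p = phead q \<Longrightarrow> phead (pcomp p q) = phead p"
  by (simp add: pcomp_def ptail_def phead_def endv_append)

lemma set_pcomp [simp]: "set (snd (pcomp p q)) = set (snd q) \<union> set (snd p)"
  by (simp add: pcomp_def)

lemma pdiv_pcomp: "pdiv (pcomp p q) = pdiv q + pdiv p"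
  by (simp add: pcomp_def pdiv_def)

lemma pcomp_cancel_left: "pcomp u p = pcomp u p' \<Longrightarrow> p = p'"
  by (cases p; cases p') (auto simp: pcomp_def ptail_def)

lemma pcomp_cancel_right: "pcomp p u = pcomp p' u \<Longrightarrow> ptail p = ptail p' \<Longrightarrow> p = p'"
  by (cases p; cases p') (auto simp: pcomp_def ptail_def)

lemma is_path_pcomp:
  assumes "is_path v D r p" "is_path v D r q" "ptail p = phead q"
  shows "is_path v D r (pcomp p q)"
  using assms unfolding is_path_def pcomp_def ptail_def phead_def
  by (simp add: chain_append)

definition path_power :: "'r qpath \<Rightarrow> nat \<Rightarrow> 'r qpath" where
  "path_power p k = (ptail p, concat (replicate k (snd p)))"

lemma set_path_power: "set (snd (path_power p k)) \<subseteq> set (snd p)"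
  by (auto simp: path_power_def)

lemma path_power_cycle:
  assumes p: "is_path v D r p" "phead p = ptail p"
  shows "is_path v D r (path_power p k) \<and> ptail (path_power p k) = ptail p
    \<and> phead (path_power p k) = ptail p \<and> pdiv (path_power p k) = (\<lambda>\<rho>. k * pdiv p \<rho>)"
proof (induction k)
  case 0
  then show ?case
    using p by (auto simp: path_power_def is_path_def ptail_def phead_def pdiv_def)
next
  case (Suc k)
  have step: "path_power p (Suc k) = pcomp (path_power p k) p"
    by (simp add: path_power_def pcomp_def ptail_def)
  show ?case
    unfolding step using Suc p
    by (auto simp: is_path_pcomp pdiv_pcomp)
qed

lemma lmult_pcomp:
  assumes "phead p = ptail u" shows "lmult u f (pcomp u p) = f p"
proof -
  have "\<exists>p'. phead p' = ptail u \<and> pcomp u p = pcomp u p'" using assms by blast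
  moreover have "(THE p'. phead p' = ptail u \<and> pcomp u p = pcomp u p') = p"
    using assms by (intro the_equality) (auto dest: pcomp_cancel_left)
  ultimately show ?thesis unfolding lmult_def by simp
qed

lemma rmult_pcomp:
  assumes "phead u = ptail p" shows "rmult f u (pcomp p u) = f p"
proof -
  have "\<exists>p'. phead u = ptail p' \<and> pcomp p u = pcomp p' u" using assms by blast
  moreover have "(THE p'. phead u = ptail p' \<and> pcomp p u = pcomp p' u) = p"
    using assms by (intro the_equality) (auto dest: pcomp_cancel_right)
  ultimately show ?thesis unfolding rmult_def by simp
qed

lemma support_lmult:
  "{w. lmult u f w \<noteq> 0} \<subseteq> pcomp u ` {p. f p \<noteq> 0 \<and> phead p = ptail u}"
proof
  fix w assume w: "w \<in> {w. lmult u f w \<noteq> 0}"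
  have "w \<in> pcomp u ` {p. phead p = ptail u}"
  proof (rule ccontr)
    assume "w \<notin> pcomp u ` {p. phead p = ptail u}"
    then have "lmult u f w = 0" by (auto simp: lmult_def)
    with w show False by simp
  qed
  then obtain p where p: "phead p = ptail u" "w = pcomp u p" by blast
  then show "w \<in> pcomp u ` {p. f p \<noteq> 0 \<and> phead p = ptail u}"
    using w by (simp add: lmult_pcomp)
qed

lemma support_rmult:
  "{w. rmult f u w \<noteq> 0} \<subseteq> (\<lambda>p. pcomp p u) ` {p. f p \<noteq> 0 \<and> ptail p = phead u}"
proof
  fix w assume w: "w \<in> {w. rmult f u w \<noteq> 0}"
  have "w \<in> (\<lambda>p. pcomp p u) ` {p. ptail p = phead u}"
  proof (rule ccontr)
    assume "w \<notin> (\<lambda>p. pcomp p u) ` {p. ptail p = phead u}"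
    then have "rmult f u w = 0" by (auto simp: rmult_def)
    with w show False by simp
  qed
  then obtain p where p: "ptail p = phead u" "w = pcomp p u" by blast
  then show "w \<in> (\<lambda>p. pcomp p u) ` {p. f p \<noteq> 0 \<and> ptail p = phead u}"
    using w by (simp add: rmult_pcomp)
qed

definition support_sum :: "('a \<Rightarrow> bool) \<Rightarrow> ('a \<Rightarrow> 'k::comm_monoid_add) \<Rightarrow> 'k" where
  "support_sum R f = sum f {w. f w \<noteq> 0 \<and> R w}"

lemma support_sum_eq_sum:
  "finite A \<Longrightarrow> {w. f w \<noteq> 0} \<subseteq> A \<Longrightarrow> support_sum R f = sum f {w\<in>A. R w}"
  unfolding support_sum_def by (rule sum.mono_neutral_left) auto

lemma support_sum_False [simp]: "support_sum (\<lambda>_. False) f = 0"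
  by (simp add: support_sum_def)

lemma support_sum_add:
  fixes f h :: "'a \<Rightarrow> 'k::comm_monoid_add"
  assumes "finite {w. f w \<noteq> 0}" "finite {w. h w \<noteq> 0}"
  shows "support_sum R (f + h) = support_sum R f + support_sum R h"
proof -
  let ?S = "{w. f w \<noteq> 0} \<union> {w. h w \<noteq> 0}"
  have "finite ?S" using assms by simp
  moreover have "{w. (f + h) w \<noteq> 0} \<subseteq> ?S" by auto
  ultimately show ?thesis
    by (simp add: support_sum_eq_sum[of ?S] sum.distrib)
qed

lemma support_sum_scale:
  fixes f :: "'a \<Rightarrow> 'k::field"
  assumes "finite {w. f w \<noteq> 0}"
  shows "support_sum R (\<lambda>w. c * f w) = c * support_sum R f"
proof -
  have "support_sum R (\<lambda>w. c * f w) = sum (\<lambda>w. c * f w) {w\<in>{w. f w \<noteq> 0}. R w}"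
    by (rule support_sum_eq_sum) (use assms in auto)
  then show ?thesis by (simp add: support_sum_def sum_distrib_left)
qed

lemma support_sum_bvec_diff:
  assumes "p1 \<noteq> p2"
  shows "support_sum R (bvec p1 - bvec p2 :: 'r qpath \<Rightarrow> 'k::field)
    = (if R p1 then 1 else 0) - (if R p2 then 1 else 0)"
proof -
  have "support_sum R (bvec p1 - bvec p2 :: 'r qpath \<Rightarrow> 'k) = sum (bvec p1 - bvec p2) {w\<in>{p1, p2}. R w}"
    by (rule support_sum_eq_sum) (auto simp: bvec_def)
  also have "\<dots> = sum (\<lambda>w. if R w then (bvec p1 - bvec p2) w else 0) {p1, p2}"
    by (rule sum.inter_filter) simp
  finally show ?thesis
    using assms by (simp add: bvec_def)
qed

lemma support_sum_lmult:
  assumes "finite {w. f w \<noteq> 0}"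
  shows "support_sum R (lmult u f) = support_sum (\<lambda>p. phead p = ptail u \<and> R (pcomp u p)) f"
proof -
  let ?U = "{p. f p \<noteq> 0 \<and> phead p = ptail u}"
  have "finite ?U" by (rule finite_subset[OF _ assms]) auto
  then have "support_sum R (lmult u f) = sum (lmult u f) {w\<in>pcomp u ` ?U. R w}"
    by (intro support_sum_eq_sum support_lmult) simp
  also have "{w\<in>pcomp u ` ?U. R w} = pcomp u ` {p\<in>?U. R (pcomp u p)}"
    by auto
  also have "sum (lmult u f) \<dots> = sum f {p\<in>?U. R (pcomp u p)}"
    by (rule sum.reindex_cong[where l = "pcomp u"])
       (auto intro: inj_onI pcomp_cancel_left simp: lmult_pcomp)
  finally show ?thesis by (simp add: support_sum_def conj_ac)
qed

lemma support_sum_rmult: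
  assumes "finite {w. f w \<noteq> 0}"
  shows "support_sum R (rmult f u) = support_sum (\<lambda>p. ptail p = phead u \<and> R (pcomp p u)) f"
proof -
  let ?U = "{p. f p \<noteq> 0 \<and> ptail p = phead u}"
  have "finite ?U" by (rule finite_subset[OF _ assms]) auto
  then have "support_sum R (rmult f u) = sum (rmult f u) {w\<in>(\<lambda>p. pcomp p u) ` ?U. R w}"
    by (intro support_sum_eq_sum support_rmult) simp
  also have "{w\<in>(\<lambda>p. pcomp p u) ` ?U. R w} = (\<lambda>p. pcomp p u) ` {p\<in>?U. R (pcomp p u)}"
    by auto
  also have "sum (rmult f u) \<dots> = sum f {p\<in>?U. R (pcomp p u)}"
  proof (rule sum.reindex_cong[where l = "\<lambda>p. pcomp p u"])
    show "inj_on (\<lambda>p. pcomp p u) {p\<in>?U. R (pcomp p u)}"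
      by (rule inj_onI) (simp add: pcomp_cancel_right)
  qed (auto simp: rmult_pcomp)
  finally show ?thesis by (simp add: support_sum_def conj_ac)
qed

subsection \<open>Paths avoiding an arrow\<close>

definition avoiding :: "'r arrow \<Rightarrow> nat \<Rightarrow> nat \<Rightarrow> 'r qpath \<Rightarrow> bool" where
  "avoiding a s t w \<longleftrightarrow> a \<notin> set (snd w) \<and> ptail w = s \<and> phead w = t"

definition avoiding_balanced :: "'r arrow \<Rightarrow> ('r qpath \<Rightarrow> 'k::field) \<Rightarrow> bool" where
  "avoiding_balanced a f \<longleftrightarrow>
     finite {w. f w \<noteq> 0} \<and> (\<forall>s t. support_sum (avoiding a s t) f = 0)"

lemma avoiding_balanced_zero: "avoiding_balanced a 0"
  by (simp add: avoiding_balanced_def support_sum_def)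

lemma avoiding_balanced_add:
  assumes "avoiding_balanced a f" "avoiding_balanced a h"
  shows "avoiding_balanced a (f + h)"
proof -
  have "finite {w. (f + h) w \<noteq> 0}"
    by (rule finite_subset[of _ "{w. f w \<noteq> 0} \<union> {w. h w \<noteq> 0}"])
       (use assms in \<open>auto simp: avoiding_balanced_def\<close>)
  then show ?thesis
    using assms by (simp add: avoiding_balanced_def support_sum_add)
qed

lemma avoiding_balanced_scale:
  assumes "avoiding_balanced a f"
  shows "avoiding_balanced a (\<lambda>w. c * f w)"
proof -
  have "finite {w. c * f w \<noteq> 0}"
    by (rule finite_subset[of _ "{w. f w \<noteq> 0}"]) (use assms in \<open>auto simp: avoiding_balanced_def\<close>)
  then show ?thesis
    using assms by (simp add: avoiding_balanced_def support_sum_scale)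
qed

lemma avoiding_balanced_lmult:
  assumes "avoiding_balanced a f"
  shows "avoiding_balanced a (lmult u f)"
proof -
  have fin: "finite {w. f w \<noteq> 0}" using assms by (simp add: avoiding_balanced_def)
  have "finite {w. lmult u f w \<noteq> 0}"
    by (rule finite_subset[OF support_lmult]) (use fin in simp)
  moreover have "support_sum (avoiding a s t) (lmult u f) = 0" for s t
  proof -
    have "(\<lambda>p. phead p = ptail u \<and> avoiding a s t (pcomp u p))
      = (if avoiding a (ptail u) t u then avoiding a s (ptail u) else (\<lambda>_. False))"
      by (auto simp: fun_eq_iff avoiding_def)
    then show ?thesis
      using assms by (simp add: support_sum_lmult fin avoiding_balanced_def)
  qed
  ultimately show ?thesis by (simp add: avoiding_balanced_def)
qed

lemma avoiding_balanced_rmult: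
  assumes "avoiding_balanced a f"
  shows "avoiding_balanced a (rmult f u)"
proof -
  have fin: "finite {w. f w \<noteq> 0}" using assms by (simp add: avoiding_balanced_def)
  have "finite {w. rmult f u w \<noteq> 0}"
    by (rule finite_subset[OF support_rmult]) (use fin in simp)
  moreover have "support_sum (avoiding a s t) (rmult f u) = 0" for s t
  proof -
    have "(\<lambda>p. ptail p = phead u \<and> avoiding a s t (pcomp p u))
      = (if avoiding a s (phead u) u then avoiding a (phead u) t else (\<lambda>_. False))"
      by (auto simp: fun_eq_iff avoiding_def)
    then show ?thesis
      using assms by (simp add: support_sum_rmult fin avoiding_balanced_def)
  qed
  ultimately show ?thesis by (simp add: avoiding_balanced_def)
qed

lemma avoiding_dW:
  assumes "\<forall>p. anticanonical v D r p \<longrightarrow> a \<notin> set (snd p)" and "p \<in> dW v D r q"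
  shows "avoiding a (phead q) (ptail q) p"
proof -
  have cyc: "anticanonical v D r (pcomp p q)" and pq: "ptail p = phead q"
    using assms(2) by (auto simp: dW_def)
  then have "a \<notin> set (snd (pcomp p q))" using assms(1) by blast
  moreover have "phead p = ptail q" using cyc pq by (simp add: anticanonical_def)
  ultimately show ?thesis using pq by (simp add: avoiding_def)
qed

lemma avoiding_balanced_two_term:
  assumes "\<forall>p. anticanonical v D r p \<longrightarrow> a \<notin> set (snd p)" and "two_term v D r q p1 p2"
  shows "avoiding_balanced a (bvec p1 - bvec p2 :: 'r qpath \<Rightarrow> 'k::field)"
proof -
  have p12: "p1 \<in> dW v D r q" "p2 \<in> dW v D r q" "p1 \<noteq> p2"
    using assms(2) by (auto simp: two_term_def)
  have "avoiding a s t p1 \<longleftrightarrow> avoiding a s t p2" for s t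
    using avoiding_dW[OF assms(1) p12(1)] avoiding_dW[OF assms(1) p12(2)]
    by (auto simp: avoiding_def)
  moreover have "finite {w. (bvec p1 - bvec p2 :: 'r qpath \<Rightarrow> 'k) w \<noteq> 0}"
    by (rule finite_subset[of _ "{p1, p2}"]) (auto simp: bvec_def)
  ultimately show ?thesis
    using p12(3) by (simp add: avoiding_balanced_def support_sum_bvec_diff)
qed

lemma J_W_avoiding_balanced:
  assumes "\<forall>p. anticanonical v D r p \<longrightarrow> a \<notin> set (snd p)" and "f \<in> J_W K v D r"
  shows "avoiding_balanced a f"
  using assms(2) unfolding J_W_def
proof induction
  case (gen g)
  then show ?case using avoiding_balanced_two_term[OF assms(1)] by blast
next
  case zero
  show ?case by (rule avoiding_balanced_zero)
next
  case (add f h)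
  then show ?case by (blast intro: avoiding_balanced_add)
next
  case (smult f c)
  then show ?case by (blast intro: avoiding_balanced_scale)
next
  case (lmult f u)
  then show ?case by (blast intro: avoiding_balanced_lmult)
next
  case (rmult f u)
  then show ?case by (blast intro: avoiding_balanced_rmult)
qed

lemma not_avoiding_balanced_bvec_diff:
  assumes "ptail c = ptail w" "phead c = phead w" "a \<in> set (snd c)" "a \<notin> set (snd w)"
  shows "\<not> avoiding_balanced a (bvec c - bvec w :: 'r qpath \<Rightarrow> 'k::field)"
proof -
  have "c \<noteq> w" using assms(3,4) by blast
  moreover have "avoiding a (ptail w) (phead w) w" "\<not> avoiding a (ptail w) (phead w) c"
    using assms(3,4) by (simp_all add: avoiding_def)
  ultimately have "support_sum (avoiding a (ptail w) (phead w)) (bvec c - bvec w :: 'r qpath \<Rightarrow> 'k) \<noteq> 0"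
    by (simp add: support_sum_bvec_diff)
  then show ?thesis unfolding avoiding_balanced_def by blast
qed

subsection \<open>Sections factor through the quiver\<close>

lemma divM_lincomb: "divM v (\<lambda>k. c * x k - y k) = (\<lambda>\<rho>. c * divM v x \<rho> - divM v y \<rho>)"
  by (simp add: divM_def pairing_def algebra_simps sum_subtractf sum_distrib_left)

lemma is_section_zero:
  assumes "is_section v A B 0" shows "lin_equiv v B A"
proof -
  obtain u where "(\<lambda>\<rho>. int (0 \<rho>)) - (B - A) = divM v u"
    using assms unfolding is_section_def lin_equiv_def by blast
  then have "B - A = (\<lambda>\<rho>. 0 * divM v u \<rho> - divM v u \<rho>)"
    by (auto simp: fun_eq_iff algebra_simps)
  then show ?thesis unfolding lin_equiv_def divM_lincomb[symmetric] by blast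
qed

lemma is_section_complement:
  assumes "gorenstein v" "is_section v A B E" "\<forall>\<rho>. E \<rho> \<le> m"
  shows "is_section v B A (\<lambda>\<rho>. m - E \<rho>)"
proof -
  obtain u0 where u0: "divM v u0 = (\<lambda>_. 1)"
    using assms(1) by (auto simp: gorenstein_def)
  obtain u1 where u1: "(\<lambda>\<rho>. int (E \<rho>)) - (B - A) = divM v u1"
    using assms(2) by (auto simp: is_section_def lin_equiv_def)
  have "(\<lambda>\<rho>. int (m - E \<rho>)) - (A - B) = divM v (\<lambda>k. int m * u0 k - u1 k)"
    unfolding divM_lincomb u0 u1[symmetric] using assms(3) by (auto simp: fun_eq_iff of_nat_diff)
  then show ?thesis by (auto simp: is_section_def lin_equiv_def)
qed

lemma reducible_section_splits:
  assumes distinct: "\<forall>i\<le>r. \<forall>j\<le>r. i \<noteq> j \<longrightarrow> \<not> lin_equiv v (D i) (D j)"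
    and ij: "i \<le> r" "j \<le> r" and sec: "is_section v (D i) (D j) E"
    and "E \<noteq> 0" "\<not> irreducible_sec v D r i j E"
  obtains k E1 E2 where "k \<le> r" "E1 \<noteq> 0" "E2 \<noteq> 0" "E = E1 + E2"
    "is_section v (D i) (D k) E1" "is_section v (D k) (D j) E2"
proof -
  obtain k E1 E2 where k: "k \<le> r" "k \<noteq> i" "k \<noteq> j" and E: "E = E1 + E2"
    and s1: "is_section v (D i) (D k) E1" and s2: "is_section v (D k) (D j) E2"
    using assms(5,6) sec unfolding irreducible_sec_def by blast
  have "E1 \<noteq> 0" using is_section_zero[of v "D i" "D k"] s1 distinct k ij by metis
  moreover have "E2 \<noteq> 0" using is_section_zero[of v "D k" "D j"] s2 distinct k ij by metis
  ultimately show thesis using that k E s1 s2 by blast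
qed

lemma path_of_section:
  fixes v :: "'r::finite \<Rightarrow> 'n::finite \<Rightarrow> int"
  assumes distinct: "\<forall>i\<le>r. \<forall>j\<le>r. i \<noteq> j \<longrightarrow> \<not> lin_equiv v (D i) (D j)"
  shows "i \<le> r \<Longrightarrow> j \<le> r \<Longrightarrow> is_section v (D i) (D j) E \<Longrightarrow>
    \<exists>p. is_path v D r p \<and> ptail p = i \<and> phead p = j \<and> pdiv p = E"
proof (induction "sum E UNIV" arbitrary: i j E rule: less_induct)
  case less
  consider "E = 0" | "irreducible_sec v D r i j E"
    | k E1 E2 where "k \<le> r" "E1 \<noteq> 0" "E2 \<noteq> 0" "E = E1 + E2"
        "is_section v (D i) (D k) E1" "is_section v (D k) (D j) E2"
    using reducible_section_splits[OF distinct less.prems] by blast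
  then show ?case
  proof cases
    case 1
    then have "i = j" using is_section_zero less.prems distinct by metis
    then show ?thesis using less.prems 1
      by (intro exI[of _ "(i, [])"]) (auto simp: is_path_def ptail_def phead_def pdiv_def)
  next
    case 2
    then show ?thesis using less.prems
      by (intro exI[of _ "(i, [(i, j, E)])"])
         (auto simp: is_path_def ptail_def phead_def pdiv_def arrows_def)
  next
    case (3 k E1 E2)
    have "sum F UNIV \<noteq> 0" if "F \<noteq> 0" for F :: "'r \<Rightarrow> nat"
    proof
      assume "sum F UNIV = 0"
      then have "F = 0" by (simp add: fun_eq_iff)
      with that show False by simp
    qed
    then have "sum E1 UNIV < sum E UNIV" "sum E2 UNIV < sum E UNIV"
      using 3(2,3) by (auto simp: 3(4) sum.distrib)
    then obtain p1 p2 where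
      p1: "is_path v D r p1" "ptail p1 = i" "phead p1 = k" "pdiv p1 = E1" and
      p2: "is_path v D r p2" "ptail p2 = k" "phead p2 = j" "pdiv p2 = E2"
      using less.hyps less.prems 3 by metis
    then show ?thesis
      by (intro exI[of _ "pcomp p2 p1"]) (auto simp: is_path_pcomp pdiv_pcomp 3 add.commute)
  qed
qed

lemma anticanonical_cycle_at:
  fixes v :: "'r::finite \<Rightarrow> 'n::finite \<Rightarrow> int"
  assumes "gorenstein v" "\<forall>i\<le>r. \<forall>j\<le>r. i \<noteq> j \<longrightarrow> \<not> lin_equiv v (D i) (D j)" "i \<le> r"
  obtains w where "anticanonical v D r w" "ptail w = i"
proof -
  obtain u where "divM v u = (\<lambda>_. 1)" using assms(1) by (auto simp: gorenstein_def)
  then have "is_section v (D i) (D i) (\<lambda>_. 1)"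
    unfolding is_section_def lin_equiv_def by (intro exI[of _ u]) simp
  then show thesis
    using path_of_section[OF assms(2,3,3)] that by (auto simp: anticanonical_def)
qed

lemma cycle_through_arrow:
  fixes v :: "'r::finite \<Rightarrow> 'n::finite \<Rightarrow> int"
  assumes gor: "gorenstein v"
    and distinct: "\<forall>i\<le>r. \<forall>j\<le>r. i \<noteq> j \<longrightarrow> \<not> lin_equiv v (D i) (D j)"
    and a: "(i, j, E) \<in> arrows v D r"
  obtains c m where "is_path v D r c" "ptail c = i" "phead c = i" "pdiv c = (\<lambda>_. m)"
    "(i, j, E) \<in> set (snd c)"
proof -
  define m where "m = Max (range E)"
  have ij: "i \<le> r" "j \<le> r" and "is_section v (D i) (D j) E"
    using a by (auto simp: arrows_def irreducible_sec_def)
  then have "is_section v (D j) (D i) (\<lambda>\<rho>. m - E \<rho>)"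
    by (intro is_section_complement gor) (auto simp: m_def)
  then obtain b where b: "is_path v D r b" "ptail b = j" "phead b = i" "pdiv b = (\<lambda>\<rho>. m - E \<rho>)"
    using path_of_section[OF distinct ij(2,1)] by blast
  have arrow: "is_path v D r (i, [(i, j, E)])" "ptail (i, [(i, j, E)]) = i"
    "phead (i, [(i, j, E)]) = j" "pdiv (i, [(i, j, E)]) = E"
    using a ij by (simp_all add: is_path_def ptail_def phead_def pdiv_def)
  show thesis
  proof (rule that[of "pcomp b (i, [(i, j, E)])" m])
    show "pdiv (pcomp b (i, [(i, j, E)])) = (\<lambda>_. m)"
      using b(4) arrow(4) by (auto simp: pdiv_pcomp fun_eq_iff m_def)
  qed (use b arrow in \<open>auto simp: is_path_pcomp\<close>)
qed

lemma bvec_diff_in_J_E: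
  assumes "is_path v D r p" "is_path v D r p'"
    "ptail p = ptail p'" "phead p = phead p'" "pdiv p = pdiv p'"
  shows "bvec p - bvec p' \<in> J_E K v D r"
  unfolding J_E_def by (rule ideal_gen.gen) (use assms in blast)

theorem corollary3p7:
  fixes v :: "'r::finite \<Rightarrow> 'n::finite \<Rightarrow> int"
    and D :: "nat \<Rightarrow> 'r \<Rightarrow> int"
    and r :: nat
  assumes field: "alg_closed_field TYPE('k::field)"
    and cone: "toric_cone_rays v"
    and gor: "gorenstein v"
    and E0: "lin_equiv v (D 0) 0"
    and distinct: "\<forall>i\<le>r. \<forall>j\<le>r. i \<noteq> j \<longrightarrow> \<not> lin_equiv v (D i) (D j)"
    and cons: "consistent TYPE('k) v D r"
  shows "\<forall>a \<in> arrows v D r. \<exists>p. anticanonical v D r p \<and> a \<in> set (snd p)"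
proof (rule ccontr)
  assume "\<not> ?thesis"
  then obtain i j E where a: "(i, j, E) \<in> arrows v D r"
    and avoided: "\<forall>p. anticanonical v D r p \<longrightarrow> (i, j, E) \<notin> set (snd p)" by auto
  obtain c m where c: "is_path v D r c" "ptail c = i" "phead c = i" "pdiv c = (\<lambda>_. m)"
    "(i, j, E) \<in> set (snd c)"
    using cycle_through_arrow[OF gor distinct a] .
  obtain w0 where w0: "anticanonical v D r w0" "ptail w0 = i"
    using anticanonical_cycle_at[OF gor distinct] a by (auto simp: arrows_def)
  have "(i, j, E) \<notin> set (snd w0)" using avoided w0(1) by blast
  define w where "w = path_power w0 m"
  have w: "is_path v D r w" "ptail w = i" "phead w = i" "pdiv w = (\<lambda>_. m)"
    "(i, j, E) \<notin> set (snd w)"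
    using path_power_cycle[of v D r w0 m] set_path_power[of w0 m] w0 \<open>(i, j, E) \<notin> set (snd w0)\<close>
    by (auto simp: w_def anticanonical_def)
  have "(bvec c - bvec w :: 'r qpath \<Rightarrow> 'k) \<in> J_E TYPE('k) v D r"
    by (rule bvec_diff_in_J_E) (use c w in simp_all)
  then have "(bvec c - bvec w :: 'r qpath \<Rightarrow> 'k) \<in> J_W TYPE('k) v D r"
    using cons by (simp add: consistent_def)
  then have "avoiding_balanced (i, j, E) (bvec c - bvec w :: 'r qpath \<Rightarrow> 'k)"
    by (rule J_W_avoiding_balanced[OF avoided])
  moreover have "\<not> avoiding_balanced (i, j, E) (bvec c - bvec w :: 'r qpath \<Rightarrow> 'k)"
    by (rule not_avoiding_balanced_bvec_diff) (use c w in simp_all)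
  ultimately show False by contradiction
qed

end
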